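(* Let $p$ be a prime and let $P$ be a finite $p$-group which is a Roquette group. Then $P$ has no non-trivial expansive subgroup whose $P$-core is trivial.
   Context: A finite group $G$ is a Roquette group if all its normal abelian subgroups are cyclic. For $g\in G$ and $T\le G$ write ${}^gT=gTg^{-1}$. For a subgroup $X$ of a group $H$, the $H$-core of $X$ is $\bigcap_{h\in H}hXh^{-1}$, the largest normal subgroup of $H$ contained in $X$. A subgroup $T$ of a finite group $G$ is expansive in $G$ if for every $g\in G\setminus N_G(T)$, the $N_G(T)$-core of the subgroup $({}^gT\cap N_G(T))\,T$ contains $T$ properly. "Non-trivial" means $T\neq 1$. *)

theory Defs
  imports "HOL-Algebra.Algebra"
begin

definition conj_set :: "('a, 'b) monoid_scheme \<Rightarrow> 'a \<Rightarrow> 'a set \<Rightarrow> 'a set" where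
  "conj_set M g T = g <#\<^bsub>M\<^esub> T #>\<^bsub>M\<^esub> inv\<^bsub>M\<^esub> g"

definition core_in :: "('a, 'b) monoid_scheme \<Rightarrow> 'a set \<Rightarrow> 'a set \<Rightarrow> 'a set" where
  "core_in M S Y = {z. \<forall>h\<in>S. z \<in> conj_set M h Y}"

definition roquette_group :: "('a, 'b) monoid_scheme \<Rightarrow> bool" where
  "roquette_group M \<longleftrightarrow> group M \<and> finite (carrier M) \<and>
     (\<forall>A. A \<lhd> M \<and> comm_group (M\<lparr>carrier := A\<rparr>) \<longrightarrow> cyclic_group (M\<lparr>carrier := A\<rparr>))"

definition expansive :: "('a, 'b) monoid_scheme \<Rightarrow> 'a set \<Rightarrow> bool" where
  "expansive M T \<longleftrightarrow> subgroup T M \<and>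
     (\<forall>g \<in> carrier M - normalizer M T.
        T \<subset> core_in M (normalizer M T)
               ((conj_set M g T \<inter> normalizer M T) <#>\<^bsub>M\<^esub> T))"

end

theory Submission
  imports Defs
begin

text \<open>
  Let \<open>A\<close> be a maximal normal abelian subgroup of the \<open>p\<close>-group \<open>P\<close>. It is self-centralizing,
  and by the Roquette property it is cyclic, \<open>A = \<langle>a\<rangle>\<close>. As every subgroup of \<open>A\<close> is normal,
  a subgroup \<open>T\<close> with trivial core meets \<open>A\<close> trivially, so elements of \<open>A \<inter> N(T)\<close> centralize
  \<open>T\<close> and \<open>a\<close> does not normalize \<open>T\<close>. Expansiveness then yields an element of
  \<open>aTa\<inverse> \<inter> N(T)\<close> outside \<open>T\<close>; from it one obtains \<open>t\<^sub>0 \<in> T\<close> whose commutator \<open>[t\<^sub>0, a]\<close> lies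
  in \<open>A\<close> and commutes with \<open>t\<^sub>0\<close>, and a suitable power gives \<open>t\<close> and \<open>z \<noteq> 1\<close> of order \<open>p\<close>
  with \<open>t a t\<inverse> = z a\<close> and \<open>[t, z] = 1\<close>. Every conjugate of \<open>t\<close> lies in \<open>t\<langle>z\<rangle>\<close>, so \<open>\<langle>z, t\<rangle>\<close>
  is a normal abelian subgroup of exponent \<open>p\<close> that is not cyclic, contradicting the Roquette
  property. For \<open>p = 2\<close> a generator \<open>a\<close> of order 4, where \<open>\<langle>a, t\<rangle>\<close> is dihedral of order 8, needs
  a separate argument.
\<close>

section \<open>Powers and conjugation\<close>

context group
begin

lemma mult_inv_mult_cancel [simp]: "x \<in> carrier G \<Longrightarrow> y \<in> carrier G \<Longrightarrow> x \<otimes> (inv x \<otimes> y) = y"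
  by (simp flip: m_assoc)

lemma inv_mult_mult_cancel [simp]: "x \<in> carrier G \<Longrightarrow> y \<in> carrier G \<Longrightarrow> inv x \<otimes> (x \<otimes> y) = y"
  by (simp flip: m_assoc)

lemma subgroup_nat_pow_closed: "subgroup H G \<Longrightarrow> h \<in> H \<Longrightarrow> h [^] (n::nat) \<in> H"
  by (induction n) (simp_all add: subgroup.one_closed subgroup.m_closed)

lemma inv_commute:
  assumes "x \<in> carrier G" "y \<in> carrier G" "x \<otimes> y = y \<otimes> x"
  shows "inv x \<otimes> y = y \<otimes> inv x"
proof -
  have "inv x \<otimes> (x \<otimes> y) \<otimes> inv x = inv x \<otimes> (y \<otimes> x) \<otimes> inv x" using assms(3) by simp
  then show ?thesis using assms(1,2) by (simp add: m_assoc)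
qed

lemma pow_commute_pow:
  assumes "x \<in> carrier G" "y \<in> carrier G" "x \<otimes> y = y \<otimes> x"
  shows "x [^] (m::nat) \<otimes> y [^] (k::nat) = y [^] k \<otimes> x [^] m"
proof -
  have "y [^] k \<otimes> x = x \<otimes> y [^] k" using group_commutes_pow[OF assms(3)[symmetric] assms(2,1)] .
  from group_commutes_pow[OF this[symmetric] assms(1)] show ?thesis using assms(2) by simp
qed

lemma mult_pow_mult_pow:
  assumes x: "x \<in> carrier G" and y: "y \<in> carrier G" and u: "u \<in> carrier G" and uy: "u \<otimes> y = y \<otimes> u"
  shows "(x \<otimes> u [^] (k::nat)) \<otimes> (y \<otimes> u [^] (l::nat)) = (x \<otimes> y) \<otimes> u [^] (k + l)"
proof -
  have "(x \<otimes> u [^] k) \<otimes> (y \<otimes> u [^] l) = x \<otimes> (u [^] k \<otimes> y) \<otimes> u [^] l"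
    using x y u by (simp add: m_assoc)
  also have "\<dots> = (x \<otimes> y) \<otimes> u [^] (k + l)"
    unfolding group_commutes_pow[OF uy u y] using x y u by (simp add: m_assoc nat_pow_mult)
  finally show ?thesis .
qed

lemma pow_mod_exponent:
  assumes "b \<in> carrier G" and "b [^] k = \<one>"
  shows "b [^] (j::nat) = b [^] (j mod k)"
proof -
  have "b [^] j = b [^] (j mod k + k * (j div k))" by simp
  also have "\<dots> = b [^] (j mod k) \<otimes> (b [^] k) [^] (j div k)"
    using assms(1) by (simp only: nat_pow_pow nat_pow_mult)
  finally show ?thesis using assms by simp
qed

lemma conj_mult:
  assumes "x \<in> carrier G" "a \<in> carrier G" "b \<in> carrier G"
  shows "x \<otimes> (a \<otimes> b) \<otimes> inv x = (x \<otimes> a \<otimes> inv x) \<otimes> (x \<otimes> b \<otimes> inv x)"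
  using assms by (simp add: m_assoc)

lemma conj_pow:
  assumes "x \<in> carrier G" "a \<in> carrier G"
  shows "x \<otimes> a [^] (n::nat) \<otimes> inv x = (x \<otimes> a \<otimes> inv x) [^] n"
proof (induction n)
  case (Suc n)
  have "x \<otimes> a [^] Suc n \<otimes> inv x = (x \<otimes> a [^] n \<otimes> inv x) \<otimes> (x \<otimes> a \<otimes> inv x)"
    using assms by (simp add: m_assoc)
  then show ?case using Suc by simp
qed (use assms in simp)

lemma conj_cancel:
  assumes "x \<in> carrier G" "u \<in> carrier G" "v \<in> carrier G" and "x \<otimes> u \<otimes> inv x = x \<otimes> v \<otimes> inv x"
  shows "u = v"
proof -
  have "inv x \<otimes> (x \<otimes> u \<otimes> inv x) \<otimes> x = inv x \<otimes> (x \<otimes> v \<otimes> inv x) \<otimes> x"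
    using assms(4) by simp
  then show ?thesis using assms(1-3) by (simp add: m_assoc)
qed

lemma commute_if_conj_eq:
  assumes "y \<in> carrier G" "b \<in> carrier G" and "y \<otimes> b \<otimes> inv y = b"
  shows "y \<otimes> b = b \<otimes> y"
proof -
  have "y \<otimes> b \<otimes> inv y \<otimes> y = b \<otimes> y" using assms(3) by simp
  then show ?thesis using assms(1,2) by (simp add: m_assoc)
qed

lemma twist_conj_pow:
  assumes t: "t \<in> carrier G" and c: "c \<in> carrier G" and w: "w \<in> carrier G"
    and tc: "t \<otimes> c \<otimes> inv t = w \<otimes> c" and tw: "t \<otimes> w = w \<otimes> t"
  shows "t [^] (k::nat) \<otimes> c \<otimes> inv (t [^] k) = w [^] k \<otimes> c"
proof (induction k)
  case (Suc k)
  have tkw: "t [^] k \<otimes> w = w \<otimes> t [^] k"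
    using group_commutes_pow[OF tw t w] by simp
  have "t [^] Suc k \<otimes> c \<otimes> inv (t [^] Suc k) = t [^] k \<otimes> (t \<otimes> c \<otimes> inv t) \<otimes> inv (t [^] k)"
    using t c by (simp add: m_assoc inv_mult_group)
  also have "\<dots> = (t [^] k \<otimes> w) \<otimes> c \<otimes> inv (t [^] k)"
    unfolding tc using t c w by (simp add: m_assoc)
  also have "\<dots> = w \<otimes> (t [^] k \<otimes> c \<otimes> inv (t [^] k))"
    unfolding tkw using t c w by (simp add: m_assoc)
  also have "\<dots> = w [^] Suc k \<otimes> c"
    unfolding Suc nat_pow_Suc2[OF w] using w c by (simp add: m_assoc)
  finally show ?case .
qed (use c in simp)

lemma twist_mult_pow:
  assumes t: "t \<in> carrier G" and c: "c \<in> carrier G" and w: "w \<in> carrier G"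
    and tc: "t \<otimes> c \<otimes> inv t = w \<otimes> c" and tw: "t \<otimes> w = w \<otimes> t" and cw: "c \<otimes> w = w \<otimes> c"
  shows "(t \<otimes> c) [^] (k::nat) = c [^] k \<otimes> w [^] (\<Sum>{0..k}) \<otimes> t [^] k"
proof (induction k)
  case (Suc k)
  have cw_pow: "w [^] n \<otimes> c = c \<otimes> w [^] n" for n :: nat
    using group_commutes_pow[OF cw[symmetric] w c] .
  have "t [^] Suc k \<otimes> c = (t [^] Suc k \<otimes> c \<otimes> inv (t [^] Suc k)) \<otimes> t [^] Suc k"
    using t c by (simp add: m_assoc)
  also have "\<dots> = c \<otimes> w [^] Suc k \<otimes> t [^] Suc k"
    unfolding twist_conj_pow[OF t c w tc tw] cw_pow ..
  finally have shift: "t [^] Suc k \<otimes> c = c \<otimes> w [^] Suc k \<otimes> t [^] Suc k" .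
  have "(t \<otimes> c) [^] Suc k = c [^] k \<otimes> w [^] (\<Sum>{0..k}) \<otimes> (t [^] Suc k \<otimes> c)"
    using Suc t c w by (simp add: m_assoc)
  also have "\<dots> = c [^] k \<otimes> (w [^] (\<Sum>{0..k}) \<otimes> c) \<otimes> (w [^] Suc k \<otimes> t [^] Suc k)"
    unfolding shift using t c w by (simp add: m_assoc del: nat_pow_Suc)
  also have "\<dots> = (c [^] k \<otimes> c) \<otimes> (w [^] (\<Sum>{0..k}) \<otimes> w [^] Suc k) \<otimes> t [^] Suc k"
    unfolding cw_pow using t c w by (simp add: m_assoc del: nat_pow_Suc)
  also have "\<dots> = c [^] Suc k \<otimes> w [^] (\<Sum>{0..Suc k}) \<otimes> t [^] Suc k"
  proof -
    have "w [^] (\<Sum>{0..k}) \<otimes> w [^] Suc k = w [^] (\<Sum>{0..Suc k})"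
      using w by (simp only: sum.atLeast0_atMost_Suc nat_pow_mult)
    moreover have "c [^] k \<otimes> c = c [^] Suc k" by simp
    ultimately show ?thesis by (simp only:)
  qed
  finally show ?case .
qed (use t c w in simp)

end

section \<open>Cyclic groups of prime exponent\<close>

lemma exists_mult_cong_of_dvd_mult_prime:
  fixes p m b z :: nat
  assumes p: "Factorial_Ring.prime p" and "m dvd b * p" and "m dvd z * p" and "\<not> m dvd z"
  shows "\<exists>i. z * i mod m = b mod m"
proof -
  have "p dvd m"
    using assms p by (metis coprime_commute coprime_dvd_mult_left_iff prime_imp_coprime)
  then obtain m' where m: "m = m' * p" by (metis dvd_def mult.commute)
  have p0: "p > 0" using p prime_gt_0_nat by blast
  obtain u where u: "z = m' * u" using \<open>m dvd z * p\<close> m p0 by auto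
  obtain v where v: "b = m' * v" using \<open>m dvd b * p\<close> m p0 by auto
  have "\<not> p dvd u" using \<open>\<not> m dvd z\<close> m u by auto
  then have "coprime u p" using p by (simp add: prime_imp_coprime coprime_commute)
  moreover have "u \<noteq> 0" using \<open>\<not> p dvd u\<close> by (metis dvd_0_right)
  ultimately obtain x y where xy: "u * x = p * y + 1"
    using bezout_nat[of u p] by (auto simp: coprime_iff_gcd_eq_1)
  have "u * (x * v) = (u * x) * v" by (simp only: mult.assoc)
  also have "\<dots> = v + p * (y * v)" unfolding xy by (simp add: algebra_simps)
  finally have "u * (x * v) = v + p * (y * v)" .
  then have uxv: "u * (x * v) mod p = v mod p" by simp
  have "z * (x * v) mod m = m' * (u * (x * v)) mod (m' * p)"
    unfolding u m by (simp only: mult.assoc)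
  also have "\<dots> = m' * (v mod p)" by (simp only: mod_mult_mult1 uxv)
  also have "\<dots> = b mod m" unfolding v m by (simp only: mod_mult_mult1)
  finally have "z * (x * v) mod m = b mod m" .
  then show ?thesis by blast
qed

context group
begin

text \<open>A cyclic group has at most one subgroup of order \<open>p\<close>.\<close>

lemma p_torsion_power_of_nontrivial:
  assumes p: "Factorial_Ring.prime (p::nat)" and a: "a \<in> carrier G"
    and "(a [^] (\<beta>::nat)) [^] p = \<one>" and "(a [^] (\<zeta>::nat)) [^] p = \<one>" and "a [^] \<zeta> \<noteq> \<one>"
  shows "\<exists>i::nat. a [^] \<beta> = (a [^] \<zeta>) [^] i"
proof -
  have "ord a dvd \<beta> * p" and "ord a dvd \<zeta> * p" and "\<not> ord a dvd \<zeta>"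
    using assms by (simp_all add: nat_pow_pow pow_eq_id)
  then obtain i where "\<zeta> * i mod ord a = \<beta> mod ord a"
    using exists_mult_cong_of_dvd_mult_prime[OF p] by blast
  then have "a [^] (\<zeta> * i) = a [^] \<beta>"
    using pow_mod_exponent[OF a pow_ord_eq_1[OF a]] by metis
  then show ?thesis using a by (metis nat_pow_pow)
qed

lemma cyclic_subgroup_nat_pow_generated:
  assumes fin: "finite (carrier G)" and H: "subgroup H G" and cyc: "cyclic_group (G\<lparr>carrier := H\<rparr>)"
  shows "\<exists>a\<in>H. H = range (\<lambda>k::nat. a [^] k)"
proof -
  obtain a where aH: "a \<in> H" and "H = range (\<lambda>k::int. a [^]\<^bsub>G\<lparr>carrier := H\<rparr>\<^esub> k)"
    using cyc group.cyclic_group[OF subgroup_imp_group[OF H]] by auto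
  then have "H = generate G {a}"
    using generate_pow[OF subgroup.mem_carrier[OF H aH]] by (auto simp flip: int_pow_consistent[OF H aH])
  also have "\<dots> = range (\<lambda>k::nat. a [^] k)"
    using generate_pow_nat ord_ge_1[OF fin] subgroup.mem_carrier[OF H aH] by fastforce
  finally show ?thesis using aH by blast
qed

lemma cyclic_exponent_prime_powers_of_nontrivial:
  assumes p: "Factorial_Ring.prime (p::nat)" and fin: "finite (carrier G)"
    and H: "subgroup H G" and cyc: "cyclic_group (G\<lparr>carrier := H\<rparr>)"
    and exp: "\<And>y. y \<in> H \<Longrightarrow> y [^] p = \<one>"
    and z: "z \<in> H" "z \<noteq> \<one>" and y: "y \<in> H"
  shows "\<exists>i::nat. y = z [^] i"
proof -
  obtain g where g: "g \<in> H" and Hg: "H = range (\<lambda>k::nat. g [^] k)"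
    using cyclic_subgroup_nat_pow_generated[OF fin H cyc] by blast
  obtain \<alpha> \<beta> :: nat where "z = g [^] \<alpha>" and "y = g [^] \<beta>"
    using z y Hg by blast
  then show ?thesis
    using p_torsion_power_of_nontrivial[OF p subgroup.mem_carrier[OF H g]] exp z y by auto
qed

lemma commuting_pair_products:
  assumes z: "z \<in> carrier G" and t: "t \<in> carrier G" and zt: "z \<otimes> t = t \<otimes> z"
    and zp: "z [^] p = \<one>" and tp: "t [^] (p::nat) = \<one>" and p: "p > 0"
    and E: "E = {z [^] (i::nat) \<otimes> t [^] (j::nat) | i j. True}"
  shows "subgroup E G" and "\<And>x y. x \<in> E \<Longrightarrow> y \<in> E \<Longrightarrow> x \<otimes> y = y \<otimes> x"
    and "\<And>y. y \<in> E \<Longrightarrow> y [^] p = \<one>" and "z \<in> E" and "t \<in> E"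
proof -
  have tz_pow: "t [^] j \<otimes> z [^] k = z [^] k \<otimes> t [^] j" for j k :: nat
    using pow_commute_pow[OF t z zt[symmetric]] .
  have mult: "(z [^] i \<otimes> t [^] j) \<otimes> (z [^] k \<otimes> t [^] l) = z [^] (i + k) \<otimes> t [^] (j + l)"
    for i j k l :: nat
    using mult_pow_mult_pow[OF nat_pow_closed[OF z] nat_pow_closed[OF z] t
        group_commutes_pow[OF zt z t, symmetric]] z by (simp add: nat_pow_mult)
  have pth_pow: "(z [^] i \<otimes> t [^] j) [^] p = \<one>" for i j :: nat
  proof -
    have "(z [^] i \<otimes> t [^] j) [^] p = (z [^] p) [^] i \<otimes> (t [^] p) [^] j"
      using pow_mult_distrib[OF tz_pow[symmetric]] z t by (simp add: nat_pow_pow mult.commute)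
    then show ?thesis using zp tp by simp
  qed
  have "z [^] (i * (p - 1)) \<otimes> t [^] (j * (p - 1)) \<otimes> (z [^] i \<otimes> t [^] j) = \<one>" for i j :: nat
  proof -
    have "z [^] (i * (p - 1)) \<otimes> t [^] (j * (p - 1)) \<otimes> (z [^] i \<otimes> t [^] j)
        = z [^] (i * (p - 1) + i) \<otimes> t [^] (j * (p - 1) + j)"
      by (rule mult)
    also have "\<dots> = z [^] (i * p) \<otimes> t [^] (j * p)"
      using p by (simp add: algebra_simps)
    also have "\<dots> = (z [^] p) [^] i \<otimes> (t [^] p) [^] j"
      using z t by (simp only: nat_pow_pow mult.commute)
    finally show ?thesis using zp tp by simp
  qed
  then have inv: "inv (z [^] i \<otimes> t [^] j) = z [^] (i * (p - 1)) \<otimes> t [^] (j * (p - 1))" for i j :: nat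
    using z t by (intro inv_equality) auto
  show "subgroup E G"
  proof (rule subgroupI)
    show "E \<subseteq> carrier G" unfolding E using z t by auto
    have "\<one> = z [^] (0::nat) \<otimes> t [^] (0::nat)" using z t by simp
    then show "E \<noteq> {}" unfolding E by blast
  next
    fix x assume "x \<in> E"
    then obtain i j :: nat where "x = z [^] i \<otimes> t [^] j" unfolding E by blast
    then show "inv x \<in> E" unfolding E using inv by blast
  next
    fix x y assume "x \<in> E" "y \<in> E"
    then obtain i j k l :: nat where "x = z [^] i \<otimes> t [^] j" and "y = z [^] k \<otimes> t [^] l"
      unfolding E by blast
    then show "x \<otimes> y \<in> E" unfolding E using mult by blast
  qed
  show "x \<otimes> y = y \<otimes> x" if "x \<in> E" "y \<in> E" for x y
    using that unfolding E by (auto simp: mult add.commute)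
  show "y [^] p = \<one>" if "y \<in> E" for y
    using that unfolding E by (auto simp: pth_pow)
  have "z = z [^] (1::nat) \<otimes> t [^] (0::nat)" and "t = z [^] (0::nat) \<otimes> t [^] (1::nat)"
    using z t by simp_all
  then show "z \<in> E" and "t \<in> E" unfolding E by blast+
qed

end

section \<open>Normalizers, cores and expansive subgroups\<close>

context group
begin

lemma conj_set_eq_image: "conj_set G g S = (\<lambda>s. g \<otimes> s \<otimes> inv g) ` S"
  unfolding conj_set_def l_coset_def r_coset_def by auto

lemma conj_set_one: "S \<subseteq> carrier G \<Longrightarrow> conj_set G \<one> S = S"
  unfolding conj_set_eq_image by (auto simp: subset_iff image_iff)

lemma conj_set_conj_set:
  assumes "g \<in> carrier G" "h \<in> carrier G" "S \<subseteq> carrier G"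
  shows "conj_set G g (conj_set G h S) = conj_set G (g \<otimes> h) S"
  unfolding conj_set_eq_image image_image
  using assms by (intro image_cong) (auto simp: m_assoc inv_mult_group)

lemma conj_set_inv_conj_set:
  assumes "g \<in> carrier G" "S \<subseteq> carrier G"
  shows "conj_set G (inv g) (conj_set G g S) = S"
  using conj_set_conj_set[OF inv_closed[OF assms(1)] assms] conj_set_one[OF assms(2)] assms(1) by simp

lemma conj_set_subgroup_self:
  assumes T: "subgroup T G" and s: "s \<in> T"
  shows "conj_set G s T = T"
proof
  show "conj_set G s T \<subseteq> T"
    unfolding conj_set_eq_image using assms by (auto simp: subgroup.m_closed subgroup.m_inv_closed)
  have "y = s \<otimes> (inv s \<otimes> y \<otimes> s) \<otimes> inv s" if "y \<in> T" for y
    using that assms by (simp add: m_assoc subgroup.mem_carrier)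
  moreover have "inv s \<otimes> y \<otimes> s \<in> T" if "y \<in> T" for y
    using that assms by (simp add: subgroup.m_closed subgroup.m_inv_closed)
  ultimately show "T \<subseteq> conj_set G s T"
    unfolding conj_set_eq_image by blast
qed

lemma mem_normalizer_iff:
  "T \<subseteq> carrier G \<Longrightarrow> g \<in> normalizer G T \<longleftrightarrow> g \<in> carrier G \<and> conj_set G g T = T"
  unfolding normalizer_def stabilizer_def conj_set_def by auto

lemma subgroup_subset_normalizer:
  assumes T: "subgroup T G"
  shows "T \<subseteq> normalizer G T"
proof
  fix s assume "s \<in> T"
  then show "s \<in> normalizer G T"
    using mem_normalizer_iff[OF subgroup.subset[OF T]] conj_set_subgroup_self[OF T]
      subgroup.mem_carrier[OF T] by simp
qed

lemma core_in_subset: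
  assumes "subgroup S G" "Y \<subseteq> carrier G"
  shows "core_in G S Y \<subseteq> Y"
proof
  fix x assume "x \<in> core_in G S Y"
  then have "x \<in> conj_set G \<one> Y"
    unfolding core_in_def using subgroup.one_closed[OF assms(1)] by blast
  then show "x \<in> Y" using conj_set_one[OF assms(2)] by simp
qed

lemma expansive_witness:
  assumes exp: "expansive G T" and g: "g \<in> carrier G" "g \<notin> normalizer G T"
  shows "\<exists>y \<in> conj_set G g T \<inter> normalizer G T. y \<notin> T"
proof (rule ccontr)
  let ?N = "normalizer G T"
  assume "\<not> ?thesis"
  then have sub: "conj_set G g T \<inter> ?N \<subseteq> T" by blast
  have T: "subgroup T G" using exp unfolding expansive_def by blast
  have "(conj_set G g T \<inter> ?N) <#> T \<subseteq> T"
    unfolding set_mult_def using sub T by (auto simp: subgroup.m_closed)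
  moreover have "core_in G ?N ((conj_set G g T \<inter> ?N) <#> T) \<subseteq> (conj_set G g T \<inter> ?N) <#> T"
    using calculation subgroup.subset[OF T]
    by (intro core_in_subset normalizer_imp_subgroup) auto
  ultimately show False
    using exp g unfolding expansive_def by blast
qed

lemma normal_inter_normalizer_centralizes:
  assumes A: "A \<lhd> G" and T: "subgroup T G" and TA: "T \<inter> A \<subseteq> {\<one>}"
    and b: "b \<in> A" "b \<in> normalizer G T" and s: "s \<in> T"
  shows "b \<otimes> s = s \<otimes> b"
proof -
  have bc: "b \<in> carrier G" and sc: "s \<in> carrier G"
    using subgroup.mem_carrier[OF normal_imp_subgroup[OF A] b(1)] subgroup.mem_carrier[OF T s] .
  have "conj_set G b T = T" using b(2) mem_normalizer_iff[OF subgroup.subset[OF T]] by blast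
  moreover have "b \<otimes> s \<otimes> inv b \<in> conj_set G b T" unfolding conj_set_eq_image using s by blast
  ultimately have "b \<otimes> s \<otimes> inv b \<otimes> inv s \<in> T"
    using T s by (simp add: subgroup.m_closed subgroup.m_inv_closed)
  moreover have "b \<otimes> (s \<otimes> inv b \<otimes> inv s) \<in> A"
    using subgroup.m_closed[OF normal_imp_subgroup[OF A] b(1)]
      normal.inv_op_closed2[OF A sc subgroup.m_inv_closed[OF normal_imp_subgroup[OF A] b(1)]] .
  moreover have "b \<otimes> (s \<otimes> inv b \<otimes> inv s) = b \<otimes> s \<otimes> inv b \<otimes> inv s"
    using bc sc by (simp add: m_assoc)
  ultimately have "b \<otimes> s \<otimes> inv b \<otimes> inv s = \<one>" using TA by auto
  then have "b \<otimes> s \<otimes> inv b \<otimes> inv s \<otimes> s \<otimes> b = s \<otimes> b" using bc sc by simp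
  then show ?thesis using bc sc by (simp add: m_assoc)
qed

end

section \<open>Normal subgroups of \<open>p\<close>-groups\<close>

definition centralizer :: "('a, 'b) monoid_scheme \<Rightarrow> 'a set \<Rightarrow> 'a set" where
  "centralizer G A = {c \<in> carrier G. \<forall>b\<in>A. c \<otimes>\<^bsub>G\<^esub> b = b \<otimes>\<^bsub>G\<^esub> c}"

definition normal_abelian :: "('a, 'b) monoid_scheme \<Rightarrow> 'a set \<Rightarrow> bool" where
  "normal_abelian G A \<longleftrightarrow> A \<lhd> G \<and> (\<forall>x\<in>A. \<forall>y\<in>A. x \<otimes>\<^bsub>G\<^esub> y = y \<otimes>\<^bsub>G\<^esub> x)"

context group
begin

lemma finite_carrier_if_prime_power_order:
  "order G = p ^ n \<Longrightarrow> Factorial_Ring.prime (p::nat) \<Longrightarrow> finite (carrier G)"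
  using order_gt_0_iff_finite prime_gt_0_nat by fastforce

lemma ord_eq_mult_prime:
  assumes ordG: "order G = p ^ n" and p: "Factorial_Ring.prime (p::nat)"
    and x: "x \<in> carrier G" "x \<noteq> \<one>"
  shows "\<exists>m>0. ord x = m * p"
proof -
  obtain s where s: "ord x = p ^ s"
    using ord_dvd_group_order[OF x(1)] ordG divides_primepow_nat[OF p] by auto
  have "s \<noteq> 0" using s x(2) ord_eq_1[OF x(1)] by (cases s) auto
  then have "ord x = p ^ (s - 1) * p" using s by (simp add: power_eq_if)
  then show ?thesis using p prime_gt_0_nat by auto
qed

lemma pow_eq_one_if_coprime_mult:
  assumes ordG: "order G = p ^ n" and p: "Factorial_Ring.prime (p::nat)" and a: "a \<in> carrier G"
    and q: "\<not> p dvd q" and aqm: "a [^] (q * m) = \<one>"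
  shows "a [^] m = \<one>"
proof -
  obtain j where "ord a = p ^ j"
    using ord_dvd_group_order[OF a] ordG divides_primepow_nat[OF p] by auto
  then have "coprime (ord a) q" using p q by (simp add: coprime_power_left_iff prime_imp_coprime)
  moreover have "ord a dvd q * m" using aqm a by (simp add: pow_eq_id)
  ultimately have "ord a dvd m" by (simp add: coprime_dvd_mult_right_iff)
  then show ?thesis using a by (simp add: pow_eq_id)
qed

lemma card_conj_orbit_prime_power:
  assumes ordG: "order G = p ^ n" and p: "Factorial_Ring.prime (p::nat)" and S: "S \<subseteq> carrier G"
  shows "\<exists>j. card {conj_set G g S | g. g \<in> carrier G} = p ^ j"
proof -
  let ?\<phi> = "\<lambda>g. \<lambda>H \<in> {H. H \<subseteq> carrier G}. g <# H #> inv g"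
  have "?\<phi> g S = conj_set G g S" for g using S unfolding conj_set_def by simp
  then have "orbit G ?\<phi> S = {conj_set G g S | g. g \<in> carrier G}"
    unfolding orbit_def by auto
  moreover have "card (orbit G ?\<phi> S) * card (stabilizer G ?\<phi> S) = order G"
    by (rule group_action.orbit_stabilizer_theorem[OF action_by_conjugation_on_power_set])
      (use S in simp)
  ultimately have "p ^ n = card {conj_set G g S | g. g \<in> carrier G} * card (stabilizer G ?\<phi> S)"
    using ordG by simp
  then have "card {conj_set G g S | g. g \<in> carrier G} dvd p ^ n" by (rule dvdI)
  then show ?thesis using divides_primepow_nat[OF p] by auto
qed

text \<open>Removing a non-trivial orbit, whose size is a positive power of \<open>p\<close>, changes neither side
  modulo \<open>p\<close>.\<close>

lemma card_conj_invariant_cong_fixed: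
  assumes ordG: "order G = p ^ n" and p: "Factorial_Ring.prime (p::nat)"
  shows "finite Y \<Longrightarrow> Y \<subseteq> Pow (carrier G) \<Longrightarrow> (\<forall>g\<in>carrier G. \<forall>S\<in>Y. conj_set G g S \<in> Y) \<Longrightarrow>
    card Y mod p = card {S\<in>Y. \<forall>g\<in>carrier G. conj_set G g S = S} mod p"
proof (induction "card Y" arbitrary: Y rule: less_induct)
  case less
  note finY = less.prems(1) and YG = less.prems(2) and inv = less.prems(3)
  show ?case
  proof (cases "\<forall>S\<in>Y. \<forall>g\<in>carrier G. conj_set G g S = S")
    case True
    then have "{S\<in>Y. \<forall>g\<in>carrier G. conj_set G g S = S} = Y" by blast
    then show ?thesis by simp
  next
    case False
    then obtain S g0 where SY: "S \<in> Y" and g0: "g0 \<in> carrier G" and nf: "conj_set G g0 S \<noteq> S"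
      by blast
    have Sc: "S \<subseteq> carrier G" using SY YG by blast
    define Orb where "Orb = {conj_set G g S | g. g \<in> carrier G}"
    have OY: "Orb \<subseteq> Y" unfolding Orb_def using inv SY by blast
    have finO: "finite Orb" using OY finY finite_subset by blast
    have SO: "S \<in> Orb" unfolding Orb_def using conj_set_one[OF Sc] by force
    have "{S, conj_set G g0 S} \<subseteq> Orb" using SO g0 unfolding Orb_def by blast
    moreover have "card {S, conj_set G g0 S} = 2" using nf by auto
    ultimately have "2 \<le> card Orb" using card_mono[OF finO] by metis
    moreover obtain j where "card Orb = p ^ j"
      using card_conj_orbit_prime_power[OF ordG p Sc] unfolding Orb_def by blast
    ultimately have pO: "p dvd card Orb" by (cases j) auto
    have other_orbit: "conj_set G g T \<notin> Orb" if g: "g \<in> carrier G" and "T \<in> Y" "T \<notin> Orb" for g T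
    proof
      assume "conj_set G g T \<in> Orb"
      then obtain h where h: "h \<in> carrier G" and e: "conj_set G g T = conj_set G h S"
        unfolding Orb_def by blast
      have "T = conj_set G (inv g) (conj_set G g T)"
        using conj_set_inv_conj_set g \<open>T \<in> Y\<close> YG by blast
      also have "\<dots> = conj_set G (inv g \<otimes> h) S"
        unfolding e using conj_set_conj_set[OF inv_closed[OF g] h Sc] .
      finally show False using \<open>T \<notin> Orb\<close> g h unfolding Orb_def by blast
    qed
    have fixed_not_in_orbit: "T \<notin> Orb" if "\<forall>g\<in>carrier G. conj_set G g T = T" for T
    proof
      assume "T \<in> Orb"
      then obtain h where h: "h \<in> carrier G" and e: "T = conj_set G h S" unfolding Orb_def by blast
      have "S = conj_set G (inv h) T" unfolding e using conj_set_inv_conj_set[OF h Sc] by simp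
      then have "S = T" using that h by simp
      then show False using that nf g0 by simp
    qed
    have "card (Y - Orb) mod p = card {T\<in>Y - Orb. \<forall>g\<in>carrier G. conj_set G g T = T} mod p"
    proof (rule less.hyps)
      show "card (Y - Orb) < card Y" using SO SY by (intro psubset_card_mono[OF finY]) blast
      show "\<forall>g\<in>carrier G. \<forall>T\<in>Y - Orb. conj_set G g T \<in> Y - Orb"
        using inv other_orbit by blast
    qed (use finY YG in auto)
    moreover have "{T\<in>Y - Orb. \<forall>g\<in>carrier G. conj_set G g T = T} = {T\<in>Y. \<forall>g\<in>carrier G. conj_set G g T = T}"
      using fixed_not_in_orbit by blast
    moreover have "card Y = card (Y - Orb) + card Orb"
      using card_Diff_subset[OF finO OY] card_mono[OF finY OY] by simp
    moreover obtain k where "card Orb = p * k" using pO by blast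
    ultimately show ?thesis by simp
  qed
qed

lemma conj_set_rcos:
  assumes A: "A \<lhd> G" and g: "g \<in> carrier G" and x: "x \<in> carrier G"
  shows "conj_set G g (A #> x) = A #> (g \<otimes> x \<otimes> inv g)"
proof
  have Ac: "A \<subseteq> carrier G" using normal_imp_subgroup[OF A] subgroup.subset by blast
  show "conj_set G g (A #> x) \<subseteq> A #> (g \<otimes> x \<otimes> inv g)"
  proof
    fix y assume "y \<in> conj_set G g (A #> x)"
    then obtain b where b: "b \<in> A" and y: "y = g \<otimes> (b \<otimes> x) \<otimes> inv g"
      unfolding conj_set_eq_image r_coset_def by blast
    have "y = (g \<otimes> b \<otimes> inv g) \<otimes> (g \<otimes> x \<otimes> inv g)"
      unfolding y using g x b Ac by (simp add: m_assoc subset_iff)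
    then show "y \<in> A #> (g \<otimes> x \<otimes> inv g)"
      using normal.inv_op_closed2[OF A g b] unfolding r_coset_def by blast
  qed
  show "A #> (g \<otimes> x \<otimes> inv g) \<subseteq> conj_set G g (A #> x)"
  proof
    fix y assume "y \<in> A #> (g \<otimes> x \<otimes> inv g)"
    then obtain b where b: "b \<in> A" and y: "y = b \<otimes> (g \<otimes> x \<otimes> inv g)"
      unfolding r_coset_def by blast
    have "y = g \<otimes> ((inv g \<otimes> b \<otimes> g) \<otimes> x) \<otimes> inv g"
      unfolding y using g x b Ac by (simp add: m_assoc subset_iff)
    then show "y \<in> conj_set G g (A #> x)"
      using normal.inv_op_closed1[OF A g b] unfolding conj_set_eq_image r_coset_def by blast
  qed
qed

lemma prime_dvd_card_cosets:
  assumes ordG: "order G = p ^ n" and p: "Factorial_Ring.prime (p::nat)"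
    and A: "subgroup A G" and C: "subgroup C G" and AC: "A \<subset> C"
  shows "p dvd card {A #> x | x. x \<in> C}"
proof -
  define Cos where "Cos = {A #> x | x. x \<in> C}"
  have Cc: "C \<subseteq> carrier G" using subgroup.subset[OF C] .
  have "rcosets\<^bsub>G\<lparr>carrier := C\<rparr>\<^esub> A = Cos" unfolding Cos_def RCOSETS_def r_coset_def by auto
  then have lagrange_C: "card Cos * card A = card C"
    using group.lagrange[OF subgroup_imp_group[OF C] subgroup_incl[OF A C]] AC
    unfolding order_def by simp
  have "card C dvd card (rcosets C) * card C" by (rule dvd_triv_right)
  then have "card C dvd p ^ n" using lagrange[OF C] ordG by simp
  moreover have "card Cos dvd card C" unfolding lagrange_C[symmetric] by (rule dvd_triv_left)
  ultimately have "card Cos dvd p ^ n" by (rule dvd_trans[rotated])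
  then obtain i where i: "card Cos = p ^ i" using divides_primepow_nat[OF p] by auto
  have "card A < card C"
    using AC Cc finite_carrier_if_prime_power_order[OF ordG p] by (simp add: finite_subset psubset_card_mono)
  then have "i \<noteq> 0" using lagrange_C i by (cases i) auto
  then show ?thesis unfolding Cos_def[symmetric] i by (simp add: dvd_power)
qed

text \<open>The non-trivial normal subgroup \<open>C/A\<close> of the \<open>p\<close>-group \<open>G/A\<close> meets its centre; this is
  proved by counting the cosets of \<open>A\<close> in \<open>C\<close> modulo \<open>p\<close>.\<close>

lemma exists_central_coset:
  assumes ordG: "order G = p ^ n" and p: "Factorial_Ring.prime (p::nat)"
    and A: "A \<lhd> G" and C: "C \<lhd> G" and AC: "A \<subset> C"
  shows "\<exists>x\<in>C - A. \<forall>y\<in>carrier G. y \<otimes> x \<otimes> inv y \<in> A #> x"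
proof -
  have As: "subgroup A G" and Cs: "subgroup C G" using A C normal_imp_subgroup by blast+
  have Ac: "A \<subseteq> carrier G" and Cc: "C \<subseteq> carrier G" using As Cs subgroup.subset by blast+
  define Cos where "Cos = {A #> x | x. x \<in> C}"
  define F where "F = {S\<in>Cos. \<forall>g\<in>carrier G. conj_set G g S = S}"
  have CosG: "Cos \<subseteq> Pow (carrier G)" unfolding Cos_def using Cc r_coset_subset_G[OF Ac] by blast
  have finCos: "finite Cos"
    using CosG finite_carrier_if_prime_power_order[OF ordG p] finite_subset[of Cos "Pow (carrier G)"]
    by auto
  have "\<forall>g\<in>carrier G. \<forall>S\<in>Cos. conj_set G g S \<in> Cos"
    unfolding Cos_def using conj_set_rcos[OF A] normal.inv_op_closed2[OF C] Cc by blast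
  then have "card Cos mod p = card F mod p"
    unfolding F_def using card_conj_invariant_cong_fixed[OF ordG p finCos CosG] by blast
  moreover have "p dvd card Cos" unfolding Cos_def using prime_dvd_card_cosets[OF ordG p As Cs AC] .
  ultimately have pF: "p dvd card F" by (simp add: mod_eq_0_iff_dvd[symmetric])
  have ACos: "A \<in> Cos" unfolding Cos_def using coset_mult_one[OF Ac] subgroup.one_closed[OF Cs] by force
  have "conj_set G g A = A" if "g \<in> carrier G" for g
    using conj_set_rcos[OF A that one_closed] coset_mult_one[OF Ac] that by simp
  then have "A \<in> F" unfolding F_def using ACos by blast
  moreover have "F \<noteq> {A}"
  proof
    assume "F = {A}"
    then have "p = 1" using pF by simp
    then show False using p by simp
  qed
  ultimately obtain S where "S \<in> F" and "S \<noteq> A" by blast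
  then obtain x where x: "x \<in> C" and Sx: "S = A #> x" and fixed: "\<forall>g\<in>carrier G. conj_set G g S = S"
    unfolding F_def Cos_def by blast
  have xc: "x \<in> carrier G" using x Cc by blast
  have "x \<notin> A" using subgroup.rcos_const[OF As] Sx \<open>S \<noteq> A\<close> by blast
  moreover have "y \<otimes> x \<otimes> inv y \<in> A #> x" if y: "y \<in> carrier G" for y
  proof -
    have "A #> (y \<otimes> x \<otimes> inv y) = A #> x"
      using fixed y Sx conj_set_rcos[OF A y xc] by simp
    then show ?thesis using rcos_self[OF _ As, of "y \<otimes> x \<otimes> inv y"] y xc by simp
  qed
  ultimately show ?thesis using x by blast
qed

lemma centralizer_normal:
  assumes A: "A \<lhd> G"
  shows "centralizer G A \<lhd> G"
proof -
  have Ac: "A \<subseteq> carrier G" using normal_imp_subgroup[OF A] subgroup.subset by blast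
  have sub: "subgroup (centralizer G A) G"
  proof (rule subgroupI)
    show "centralizer G A \<subseteq> carrier G" unfolding centralizer_def by blast
    have "\<one> \<in> centralizer G A" unfolding centralizer_def using Ac by auto
    then show "centralizer G A \<noteq> {}" by blast
  next
    fix c assume "c \<in> centralizer G A"
    then have c: "c \<in> carrier G" and cb: "\<And>b. b \<in> A \<Longrightarrow> c \<otimes> b = b \<otimes> c"
      unfolding centralizer_def by auto
    have "inv c \<otimes> b = b \<otimes> inv c" if "b \<in> A" for b
      using inv_commute[OF c _ cb] Ac that by blast
    then show "inv c \<in> centralizer G A" unfolding centralizer_def using c by blast
  next
    fix c d assume "c \<in> centralizer G A" "d \<in> centralizer G A"
    then have c: "c \<in> carrier G" "\<And>b. b \<in> A \<Longrightarrow> c \<otimes> b = b \<otimes> c"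
      and d: "d \<in> carrier G" "\<And>b. b \<in> A \<Longrightarrow> d \<otimes> b = b \<otimes> d"
      unfolding centralizer_def by auto
    have "c \<otimes> d \<otimes> b = b \<otimes> (c \<otimes> d)" if b: "b \<in> A" for b
    proof -
      have bc: "b \<in> carrier G" using b Ac by blast
      have "c \<otimes> d \<otimes> b = c \<otimes> (b \<otimes> d)" using b c d bc by (simp add: m_assoc)
      also have "\<dots> = b \<otimes> (c \<otimes> d)" using b c d bc by (simp flip: m_assoc)
      finally show ?thesis .
    qed
    then show "c \<otimes> d \<in> centralizer G A" unfolding centralizer_def using c d by blast
  qed
  have "g \<otimes> c \<otimes> inv g \<in> centralizer G A" if g: "g \<in> carrier G" and c: "c \<in> centralizer G A" for g c
  proof -
    have cc: "c \<in> carrier G" using c unfolding centralizer_def by blast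
    have "g \<otimes> c \<otimes> inv g \<otimes> b = b \<otimes> (g \<otimes> c \<otimes> inv g)" if b: "b \<in> A" for b
    proof -
      have bc: "b \<in> carrier G" using b Ac by blast
      have b': "inv g \<otimes> b \<otimes> g \<in> A" using normal.inv_op_closed1[OF A g b] .
      have e: "c \<otimes> (inv g \<otimes> b \<otimes> g) = (inv g \<otimes> b \<otimes> g) \<otimes> c"
        using c b' unfolding centralizer_def by blast
      have "g \<otimes> c \<otimes> inv g \<otimes> b = g \<otimes> (c \<otimes> (inv g \<otimes> b \<otimes> g)) \<otimes> inv g"
        using g cc bc by (simp add: m_assoc)
      also have "\<dots> = b \<otimes> (g \<otimes> c \<otimes> inv g)"
        unfolding e using g cc bc by (simp add: m_assoc)
      finally show ?thesis .
    qed
    then show ?thesis unfolding centralizer_def using g cc by blast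
  qed
  then show ?thesis using sub by (simp add: normal_inv_iff)
qed

lemma centralizer_mult_pow_mult_pow:
  assumes "A \<subseteq> carrier G" and "u \<in> centralizer G A" and "b \<in> A" and "b' \<in> A"
  shows "(b \<otimes> u [^] (k::nat)) \<otimes> (b' \<otimes> u [^] (l::nat)) = (b \<otimes> b') \<otimes> u [^] (k + l)"
  using mult_pow_mult_pow[of b b' u] assms unfolding centralizer_def by auto

lemma subgroup_adjoin_centralizing:
  assumes fin: "finite (carrier G)" and A: "subgroup A G" and uA: "u \<in> centralizer G A"
  shows "subgroup {b \<otimes> u [^] (k::nat) | b k. b \<in> A} G" (is "subgroup ?B G")
proof -
  have Ac: "A \<subseteq> carrier G" using subgroup.subset[OF A] .
  have u: "u \<in> carrier G" using uA unfolding centralizer_def by blast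
  note mult = centralizer_mult_pow_mult_pow[OF Ac uA]
  show ?thesis
  proof (rule subgroupI)
    show "?B \<subseteq> carrier G" using Ac u by auto
    have "\<one> = \<one> \<otimes> u [^] (0::nat)" by simp
    then show "?B \<noteq> {}" using subgroup.one_closed[OF A] by blast
  next
    fix y assume "y \<in> ?B"
    then obtain b k where b: "b \<in> A" and y: "y = b \<otimes> u [^] (k::nat)" by blast
    have bc: "b \<in> carrier G" using b Ac by blast
    have "(inv b \<otimes> u [^] (k * (ord u - 1))) \<otimes> y = (inv b \<otimes> b) \<otimes> u [^] (k * (ord u - 1) + k)"
      unfolding y by (rule mult[OF subgroup.m_inv_closed[OF A b] b])
    also have "k * (ord u - 1) + k = ord u * k" using ord_ge_1[OF fin u] by (simp add: algebra_simps)
    finally have "(inv b \<otimes> u [^] (k * (ord u - 1))) \<otimes> y = \<one>"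
      using bc u by (simp add: nat_pow_pow[symmetric])
    then have "inv y = inv b \<otimes> u [^] (k * (ord u - 1))" using y bc u by (intro inv_equality) auto
    then show "inv y \<in> ?B" using subgroup.m_inv_closed[OF A b] by blast
  next
    fix y y' assume "y \<in> ?B" "y' \<in> ?B"
    then obtain b k b' l where "b \<in> A" "y = b \<otimes> u [^] (k::nat)" "b' \<in> A" "y' = b' \<otimes> u [^] (l::nat)"
      by blast
    then show "y \<otimes> y' \<in> ?B" using mult subgroup.m_closed[OF A] by blast
  qed
qed

lemma normal_abelian_adjoin_central_coset:
  assumes fin: "finite (carrier G)" and A: "normal_abelian G A" and uA: "u \<in> centralizer G A"
    and central: "\<And>y. y \<in> carrier G \<Longrightarrow> y \<otimes> u \<otimes> inv y \<in> A #> u"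
  shows "normal_abelian G {b \<otimes> u [^] (k::nat) | b k. b \<in> A}" (is "normal_abelian G ?B")
proof -
  have An: "A \<lhd> G" and Aab: "\<And>x y. x \<in> A \<Longrightarrow> y \<in> A \<Longrightarrow> x \<otimes> y = y \<otimes> x"
    using A unfolding normal_abelian_def by auto
  have As: "subgroup A G" using normal_imp_subgroup[OF An] .
  have Ac: "A \<subseteq> carrier G" using subgroup.subset[OF As] .
  have u: "u \<in> carrier G" using uA unfolding centralizer_def by blast
  have "y \<otimes> h \<otimes> inv y \<in> ?B" if y: "y \<in> carrier G" and h: "h \<in> ?B" for y h
  proof -
    obtain b k where b: "b \<in> A" and hk: "h = b \<otimes> u [^] (k::nat)" using h by blast
    have bc: "b \<in> carrier G" using b Ac by blast
    obtain b2 where b2: "b2 \<in> A" and yu: "y \<otimes> u \<otimes> inv y = b2 \<otimes> u"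
      using central[OF y] unfolding r_coset_def by blast
    have b2c: "b2 \<in> carrier G" using b2 Ac by blast
    have "u \<otimes> b2 = b2 \<otimes> u" using uA b2 unfolding centralizer_def by blast
    then have "(b2 \<otimes> u) [^] k = b2 [^] k \<otimes> u [^] k" using pow_mult_distrib[OF sym] b2c u by blast
    then have "y \<otimes> h \<otimes> inv y = ((y \<otimes> b \<otimes> inv y) \<otimes> b2 [^] k) \<otimes> u [^] k"
      unfolding hk conj_mult[OF y bc nat_pow_closed[OF u]] conj_pow[OF y u] yu
      using y bc b2c u by (simp add: m_assoc)
    then show ?thesis
      using subgroup.m_closed[OF As normal.inv_op_closed2[OF An y b] subgroup_nat_pow_closed[OF As b2]]
      by blast
  qed
  then have "?B \<lhd> G" using subgroup_adjoin_centralizing[OF fin As uA] by (simp add: normal_inv_iff)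
  moreover have "x \<otimes> y = y \<otimes> x" if xB: "x \<in> ?B" and yB: "y \<in> ?B" for x y
  proof -
    obtain b k b' l where "b \<in> A" "x = b \<otimes> u [^] (k::nat)" "b' \<in> A" "y = b' \<otimes> u [^] (l::nat)"
      using xB yB by blast
    then show ?thesis using centralizer_mult_pow_mult_pow[OF Ac uA] Aab by (simp add: add.commute)
  qed
  ultimately show ?thesis unfolding normal_abelian_def by blast
qed

lemma maximal_normal_abelian_self_centralizing:
  assumes ordG: "order G = p ^ n" and p: "Factorial_Ring.prime (p::nat)"
    and A: "normal_abelian G A" and max: "\<And>B. normal_abelian G B \<Longrightarrow> A \<subseteq> B \<Longrightarrow> B = A"
  shows "centralizer G A \<subseteq> A"
proof (rule ccontr)
  assume "\<not> centralizer G A \<subseteq> A"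
  moreover have An: "A \<lhd> G" using A unfolding normal_abelian_def by blast
  moreover have "A \<subseteq> centralizer G A"
    using A normal_imp_subgroup[OF An] subgroup.subset unfolding normal_abelian_def centralizer_def
    by blast
  ultimately have "A \<subset> centralizer G A" by blast
  then obtain u where u: "u \<in> centralizer G A" "u \<notin> A"
    and central: "\<forall>y\<in>carrier G. y \<otimes> u \<otimes> inv y \<in> A #> u"
    using exists_central_coset[OF ordG p An centralizer_normal[OF An]] by blast
  let ?B = "{b \<otimes> u [^] (k::nat) | b k. b \<in> A}"
  have B: "normal_abelian G ?B"
    using normal_abelian_adjoin_central_coset[OF finite_carrier_if_prime_power_order[OF ordG p] A u(1)]
      central by blast
  have uc: "u \<in> carrier G" using u unfolding centralizer_def by blast
  have "A \<subseteq> ?B"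
  proof
    fix b assume b: "b \<in> A"
    then have "b = b \<otimes> u [^] (0::nat)"
      using subgroup.mem_carrier[OF normal_imp_subgroup[OF An] b] by simp
    then show "b \<in> ?B" using b by blast
  qed
  moreover have "u \<in> ?B"
  proof -
    have "u = \<one> \<otimes> u [^] (1::nat)" using uc by simp
    then show ?thesis using subgroup.one_closed[OF normal_imp_subgroup[OF An]] by blast
  qed
  ultimately show False using max[OF B] u(2) by blast
qed

lemma exists_maximal_normal_abelian:
  assumes fin: "finite (carrier G)"
  shows "\<exists>A. normal_abelian G A \<and> (\<forall>B. normal_abelian G B \<longrightarrow> A \<subseteq> B \<longrightarrow> B = A)"
proof -
  have "{B. normal_abelian G B} \<subseteq> Pow (carrier G)"
    unfolding normal_abelian_def using normal_imp_subgroup subgroup.subset by blast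
  then have "finite {B. normal_abelian G B}" using fin finite_subset by blast
  moreover have "normal_abelian G {\<one>}"
    unfolding normal_abelian_def normal_inv_iff using triv_subgroup by simp
  ultimately obtain A where "normal_abelian G A" and "\<forall>B. normal_abelian G B \<longrightarrow> A \<subseteq> B \<longrightarrow> A = B"
    using finite_has_maximal[of "{B. normal_abelian G B}"] by blast
  then show ?thesis by blast
qed

lemma roquette_normal_abelian_cyclic:
  assumes "roquette_group G" and "normal_abelian G A"
  shows "cyclic_group (G\<lparr>carrier := A\<rparr>)"
proof -
  have "A \<lhd> G" and "\<forall>x\<in>A. \<forall>y\<in>A. x \<otimes> y = y \<otimes> x" using assms(2) unfolding normal_abelian_def by auto
  then have "comm_group (G\<lparr>carrier := A\<rparr>)"
    using group.group_comm_groupI[OF subgroup_imp_group[OF normal_imp_subgroup]] by simp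
  then show ?thesis using assms(1) \<open>A \<lhd> G\<close> unfolding roquette_group_def by blast
qed

end

section \<open>A self-centralizing cyclic normal subgroup\<close>

locale self_centralizing_cyclic = group G for G (structure) +
  fixes p n :: nat and A :: "'a set" and a :: 'a
  assumes order_eq: "order G = p ^ n" and prime: "Factorial_Ring.prime p"
    and A_normal: "A \<lhd> G" and a: "a \<in> carrier G" and A_eq: "A = range (\<lambda>k::nat. a [^] k)"
    and self_centralizing: "centralizer G A \<subseteq> A"
begin

lemma A_subgroup: "subgroup A G"
  by (rule normal_imp_subgroup[OF A_normal])

lemma A_subset: "A \<subseteq> carrier G"
  using A_eq a by auto

lemma pow_a_mem_A: "a [^] (k::nat) \<in> A"
  using A_eq by auto

lemma a_mem_A: "a \<in> A"
  using pow_a_mem_A[of 1] a by simp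

lemma mem_A_pow_a: "x \<in> A \<Longrightarrow> \<exists>k::nat. x = a [^] k"
  using A_eq by auto

lemma A_commute:
  assumes "x \<in> A" "y \<in> A"
  shows "x \<otimes> y = y \<otimes> x"
proof -
  obtain i j :: nat where "x = a [^] i" "y = a [^] j" using assms mem_A_pow_a by blast
  then show ?thesis using a by (simp add: nat_pow_mult add.commute)
qed

lemma mem_A_if_commute_a:
  assumes x: "x \<in> carrier G" and xa: "x \<otimes> a = a \<otimes> x"
  shows "x \<in> A"
proof -
  have "x \<otimes> b = b \<otimes> x" if "b \<in> A" for b
    using mem_A_pow_a[OF that] group_commutes_pow[OF xa[symmetric] a x] by auto
  then show ?thesis using x self_centralizing unfolding centralizer_def by blast
qed

lemma conj_A_power_map: "x \<in> carrier G \<Longrightarrow> \<exists>r::nat. \<forall>b\<in>A. x \<otimes> b \<otimes> inv x = b [^] r"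
proof -
  assume x: "x \<in> carrier G"
  obtain r :: nat where r: "x \<otimes> a \<otimes> inv x = a [^] r"
    using mem_A_pow_a normal.inv_op_closed2[OF A_normal x a_mem_A] by blast
  have "x \<otimes> b \<otimes> inv x = b [^] r" if bA: "b \<in> A" for b
  proof -
    obtain k :: nat where k: "b = a [^] k" using mem_A_pow_a[OF bA] by blast
    have "x \<otimes> b \<otimes> inv x = a [^] (r * k)"
      unfolding k conj_pow[OF x a] r using a by (simp add: nat_pow_pow)
    then show ?thesis unfolding k using a by (simp add: nat_pow_pow mult.commute)
  qed
  then show ?thesis by blast
qed

text \<open>Every subgroup of the cyclic normal subgroup \<open>A\<close> is normal in \<open>G\<close>, so it lies in the core.\<close>

lemma inter_A_trivial_if_core_trivial:
  assumes T: "subgroup T G" and core: "core_in G (carrier G) T = {\<one>}"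
  shows "T \<inter> A \<subseteq> {\<one>}"
proof
  fix h assume h: "h \<in> T \<inter> A"
  have "h \<in> conj_set G g T" if g: "g \<in> carrier G" for g
  proof -
    obtain r :: nat where "\<forall>b\<in>A. inv g \<otimes> b \<otimes> inv (inv g) = b [^] r"
      using conj_A_power_map g by blast
    then have "inv g \<otimes> h \<otimes> g = h [^] r" using h g by simp
    then have "inv g \<otimes> h \<otimes> g \<in> T" using subgroup_nat_pow_closed[OF T] h by simp
    moreover have "h = g \<otimes> (inv g \<otimes> h \<otimes> g) \<otimes> inv g"
      using g h A_subset by (auto simp: m_assoc)
    ultimately show ?thesis unfolding conj_set_eq_image by blast
  qed
  then have "h \<in> core_in G (carrier G) T" unfolding core_in_def by blast
  then show "h \<in> {\<one>}" using core by simp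
qed

lemma a_notin_normalizer:
  assumes T: "subgroup T G" and TA: "T \<inter> A \<subseteq> {\<one>}" and Tne: "T \<noteq> {\<one>}"
  shows "a \<notin> normalizer G T"
proof
  assume aN: "a \<in> normalizer G T"
  have "s \<in> A" if s: "s \<in> T" for s
  proof (rule mem_A_if_commute_a)
    show "s \<in> carrier G" using subgroup.mem_carrier[OF T s] .
    show "s \<otimes> a = a \<otimes> s"
      using normal_inter_normalizer_centralizes[OF A_normal T TA a_mem_A aN s] by simp
  qed
  then show False using TA Tne subgroup.one_closed[OF T] by blast
qed

lemma exists_commutator_twist:
  assumes T: "subgroup T G" and Tne: "T \<noteq> {\<one>}" and exp: "expansive G T"
    and TA: "T \<inter> A \<subseteq> {\<one>}"
  obtains t0 w0 where "t0 \<in> T" "t0 \<noteq> \<one>" "w0 \<in> A"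
    "t0 \<otimes> a \<otimes> inv t0 = w0 \<otimes> a" "t0 \<otimes> w0 = w0 \<otimes> t0"
proof -
  let ?N = "normalizer G T"
  have Tc: "T \<subseteq> carrier G" using subgroup.subset[OF T] .
  have Nsub: "subgroup ?N G" using normalizer_imp_subgroup[OF Tc] .
  obtain y where "y \<in> conj_set G a T" and yN: "y \<in> ?N" and yT: "y \<notin> T"
    using expansive_witness[OF exp a a_notin_normalizer[OF T TA Tne]] by blast
  then obtain t0 where t0T: "t0 \<in> T" and y: "y = a \<otimes> t0 \<otimes> inv a"
    unfolding conj_set_eq_image by blast
  have t0: "t0 \<in> carrier G" using t0T Tc by blast
  \<comment> \<open>the commutator \<open>w0 = [t0, a]\<close> lies in \<open>A \<inter> N(T)\<close>, hence centralizes \<open>T\<close>\<close>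
  define w0 where "w0 = t0 \<otimes> a \<otimes> inv t0 \<otimes> inv a"
  have w0c: "w0 \<in> carrier G" unfolding w0_def using t0 a by simp
  have w0A: "w0 \<in> A"
    unfolding w0_def using subgroup.m_closed[OF A_subgroup normal.inv_op_closed2[OF A_normal t0
          a_mem_A] subgroup.m_inv_closed[OF A_subgroup a_mem_A]] by simp
  have inv_w0: "inv w0 = y \<otimes> inv t0" unfolding w0_def y using t0 a by (simp add: inv_mult_group m_assoc)
  have "inv w0 \<in> ?N" unfolding inv_w0
    using subgroup.m_closed[OF Nsub yN subgroup.m_inv_closed[OF Nsub]] subgroup_subset_normalizer[OF T]
      t0T by blast
  then have "inv (inv w0) \<in> ?N" by (rule subgroup.m_inv_closed[OF Nsub])
  then have "w0 \<in> ?N" using w0c by simp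
  then have "t0 \<otimes> w0 = w0 \<otimes> t0"
    using normal_inter_normalizer_centralizes[OF A_normal T TA w0A _ t0T] by simp
  moreover have "t0 \<otimes> a \<otimes> inv t0 = w0 \<otimes> a" unfolding w0_def using t0 a by (simp add: m_assoc)
  moreover have "t0 \<noteq> \<one>" using yT y a subgroup.one_closed[OF T] by auto
  ultimately show thesis using that t0T w0A by blast
qed

end

lemma (in group) exists_self_centralizing_cyclic:
  assumes ordG: "order G = p ^ n" and p: "Factorial_Ring.prime p" and R: "roquette_group G"
  shows "\<exists>A a. self_centralizing_cyclic G p n A a"
proof -
  have fin: "finite (carrier G)" using finite_carrier_if_prime_power_order[OF ordG p] .
  obtain A where A: "normal_abelian G A" and max: "\<And>B. normal_abelian G B \<Longrightarrow> A \<subseteq> B \<Longrightarrow> B = A"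
    using exists_maximal_normal_abelian[OF fin] by blast
  have A_normal: "A \<lhd> G" using A unfolding normal_abelian_def by blast
  obtain a where "a \<in> A" and A_eq: "A = range (\<lambda>k::nat. a [^] k)"
    using cyclic_subgroup_nat_pow_generated[OF fin normal_imp_subgroup[OF A_normal]
        roquette_normal_abelian_cyclic[OF R A]] by blast
  then have a: "a \<in> carrier G" using subgroup.mem_carrier[OF normal_imp_subgroup[OF A_normal]] by blast
  have "centralizer G A \<subseteq> A"
    using maximal_normal_abelian_self_centralizing[OF ordG p A max] .
  with ordG p A_normal a A_eq have "self_centralizing_cyclic G p n A a"
    by (intro self_centralizing_cyclic.intro self_centralizing_cyclic_axioms.intro is_group)
  then show ?thesis by blast
qed

section \<open>An element twisting the generator\<close>

locale twisted_self_centralizing_cyclic = self_centralizing_cyclic +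
  fixes t z
  assumes t: "t \<in> carrier G" and t_pow_p: "t [^] p = \<one>"
    and z_mem_A: "z \<in> A" and z_ne_one: "z \<noteq> \<one>" and z_pow_p: "z [^] p = \<one>"
    and t_conj_a: "t \<otimes> a \<otimes> inv t = z \<otimes> a" and t_z_commute: "t \<otimes> z = z \<otimes> t"
begin

lemma z: "z \<in> carrier G"
  using z_mem_A A_subset by blast

lemma t_notin_A: "t \<notin> A"
proof
  assume "t \<in> A"
  then have "t \<otimes> a \<otimes> inv t = a" using A_commute a_mem_A t a by (simp add: m_assoc)
  then show False using t_conj_a z a z_ne_one by simp
qed

lemma t_conj_pow_a: "t \<otimes> a [^] (q::nat) \<otimes> inv t = z [^] q \<otimes> a [^] q"
  unfolding conj_pow[OF t a] t_conj_a
  using pow_mult_distrib[OF A_commute[OF z_mem_A a_mem_A] z a] .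

lemma conj_t_if_mem_A:
  assumes "x \<in> A"
  shows "\<exists>j::nat. x \<otimes> t \<otimes> inv x = t \<otimes> z [^] j"
proof -
  obtain i :: nat where x: "x = a [^] i" using mem_A_pow_a[OF assms] by blast
  have "inv (z [^] i) = z [^] (i * (p - 1))"
  proof (rule inv_equality)
    have "i * (p - 1) + i = p * i" using prime_gt_0_nat[OF prime] by (simp add: algebra_simps)
    then have "z [^] (i * (p - 1)) \<otimes> z [^] i = (z [^] p) [^] i"
      using z by (simp only: nat_pow_mult nat_pow_pow)
    then show "z [^] (i * (p - 1)) \<otimes> z [^] i = \<one>" using z_pow_p by simp
  qed (use z in simp_all)
  moreover have "a [^] i \<otimes> t \<otimes> inv (a [^] i) = t \<otimes> inv (z [^] i)"
  proof -
    have "t \<otimes> a [^] i = (t \<otimes> a [^] i \<otimes> inv t) \<otimes> t" using t a by (simp add: m_assoc)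
    then have "t \<otimes> a [^] i = z [^] i \<otimes> a [^] i \<otimes> t" unfolding t_conj_pow_a .
    then have "a [^] i \<otimes> t = inv (z [^] i) \<otimes> t \<otimes> a [^] i"
      using t a z by (simp add: m_assoc)
    then have "a [^] i \<otimes> t \<otimes> inv (a [^] i) = inv (z [^] i) \<otimes> t"
      using t a z by (simp add: m_assoc)
    also have "\<dots> = t \<otimes> inv (z [^] i)"
      using inv_commute[OF _ t group_commutes_pow[OF t_z_commute[symmetric] z t]] z by simp
    finally show ?thesis .
  qed
  ultimately show ?thesis unfolding x by metis
qed

lemma conj_t_if_conj_a_eq:
  assumes x: "x \<in> carrier G" and xa: "x \<otimes> a \<otimes> inv x = t \<otimes> a \<otimes> inv t"
  shows "\<exists>j::nat. x \<otimes> t \<otimes> inv x = t \<otimes> z [^] j"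
proof -
  define y where "y = inv t \<otimes> x"
  have y: "y \<in> carrier G" unfolding y_def using x t by simp
  have "y \<otimes> a \<otimes> inv y = inv t \<otimes> (x \<otimes> a \<otimes> inv x) \<otimes> t"
    unfolding y_def using x t a by (simp add: m_assoc inv_mult_group)
  also have "\<dots> = a" unfolding xa using t a by (simp add: m_assoc)
  finally have "y \<in> A" using mem_A_if_commute_a[OF y] commute_if_conj_eq[OF y a] by blast
  then obtain j :: nat where j: "y \<otimes> t \<otimes> inv y = t \<otimes> z [^] j"
    using conj_t_if_mem_A by blast
  have "x = t \<otimes> y" unfolding y_def using x t by simp
  then have "x \<otimes> t \<otimes> inv x = t \<otimes> (y \<otimes> t \<otimes> inv y) \<otimes> inv t"
    using t y by (simp add: m_assoc inv_mult_group)
  also have "\<dots> = t \<otimes> (z [^] j \<otimes> t) \<otimes> inv t"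
    unfolding j group_commutes_pow[OF t_z_commute[symmetric] z t] ..
  also have "\<dots> = t \<otimes> z [^] j" using t z by (simp add: m_assoc)
  finally show ?thesis by blast
qed

lemma conj_t_in_coset:
  assumes x: "x \<in> carrier G"
  shows "inv t \<otimes> (x \<otimes> t \<otimes> inv x) \<in> A"
proof -
  obtain r :: nat where r: "\<forall>b\<in>A. x \<otimes> b \<otimes> inv x = b [^] r" using conj_A_power_map[OF x] by blast
  define t' where "t' = x \<otimes> t \<otimes> inv x"
  have t': "t' \<in> carrier G" unfolding t'_def using x t by simp
  define u where "u = t' \<otimes> a \<otimes> inv t'"
  have uA: "u \<in> A" unfolding u_def using normal.inv_op_closed2[OF A_normal t' a_mem_A] .
  have u: "u \<in> carrier G" using uA A_subset by blast
  \<comment> \<open>conjugating \<open>t a t\<inverse> = z a\<close> by \<open>x\<close> shows that \<open>t'\<close> acts on \<open>a\<close> as \<open>t\<close> does\<close>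
  have "x \<otimes> u \<otimes> inv x = u [^] r" using r uA by blast
  also have "\<dots> = t' \<otimes> (x \<otimes> a \<otimes> inv x) \<otimes> inv t'"
    unfolding u_def r[rule_format, OF a_mem_A] by (rule conj_pow[OF t' a, symmetric])
  also have "\<dots> = x \<otimes> (t \<otimes> a \<otimes> inv t) \<otimes> inv x"
    unfolding t'_def using x t a by (simp add: m_assoc inv_mult_group)
  finally have ut: "u = t \<otimes> a \<otimes> inv t"
    using conj_cancel[OF x u] t a by simp
  have "(inv t \<otimes> t') \<otimes> a \<otimes> inv (inv t \<otimes> t') = inv t \<otimes> u \<otimes> t"
    unfolding u_def using t t' a by (simp add: m_assoc inv_mult_group)
  also have "\<dots> = a" unfolding ut using t a by (simp add: m_assoc)
  finally have "(inv t \<otimes> t') \<otimes> a \<otimes> inv (inv t \<otimes> t') = a" .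
  moreover have c: "inv t \<otimes> t' \<in> carrier G" using t t' by simp
  ultimately have "inv t \<otimes> t' \<in> A" using mem_A_if_commute_a[OF c] commute_if_conj_eq[OF c a] by blast
  then show ?thesis unfolding t'_def .
qed

lemma A_p_torsion_powers_z:
  assumes "c \<in> A" and "c [^] p = \<one>"
  shows "\<exists>i::nat. c = z [^] i"
proof -
  obtain q \<zeta> :: nat where "c = a [^] q" and "z = a [^] \<zeta>" using assms(1) z_mem_A mem_A_pow_a by blast
  then show ?thesis
    using p_torsion_power_of_nontrivial[OF prime a] assms(2) z_pow_p z_ne_one by simp
qed

lemma t_mult_pow_a_pow_p:
  "(t \<otimes> a [^] (q::nat)) [^] p = (a [^] q) [^] p \<otimes> (z [^] q) [^] (\<Sum>{0..p})"
proof -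
  have zq: "z [^] q \<in> carrier G" and aq: "a [^] q \<in> carrier G" using z a by simp_all
  have "t \<otimes> z [^] q = z [^] q \<otimes> t" using group_commutes_pow[OF t_z_commute[symmetric] z t] by simp
  moreover have "a [^] q \<otimes> z [^] q = z [^] q \<otimes> a [^] q"
    using A_commute[OF pow_a_mem_A subgroup_nat_pow_closed[OF A_subgroup z_mem_A]] .
  ultimately show ?thesis
    using twist_mult_pow[OF t aq zq t_conj_pow_a] t_pow_p aq zq by simp
qed

text \<open>For odd \<open>p\<close> the \<open>z\<close>-part of \<open>(t c)\<^sup>p\<close> vanishes since \<open>p\<close> divides \<open>1 + 2 + \<dots> + p\<close>;
  for \<open>p = 2\<close> it does not, and the only obstruction is a generator \<open>a\<close> of order 4.\<close>

lemma t_mult_order_p_powers_z: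
  assumes c: "c \<in> A" and tc: "(t \<otimes> c) [^] p = \<one>" and not_small: "\<not> (p = 2 \<and> a [^] (4::nat) = \<one>)"
  shows "\<exists>i::nat. c = z [^] i"
proof -
  obtain q :: nat where cq: "c = a [^] q" using mem_A_pow_a[OF c] by blast
  define w where "w = z [^] q"
  have cc: "c \<in> carrier G" using c A_subset by blast
  have w: "w \<in> carrier G" unfolding w_def using z by simp
  have "w [^] p = (z [^] p) [^] q" unfolding w_def using z by (simp add: nat_pow_pow mult.commute)
  then have wp: "w [^] p = \<one>" using z_pow_p by simp
  have key: "c [^] p \<otimes> w [^] (\<Sum>{0..p}) = \<one>"
    using t_mult_pow_a_pow_p[of q] tc unfolding cq w_def by simp
  show ?thesis
  proof (cases "p = 2")
    case False
    then have "odd p" using prime_odd_nat[OF prime] prime_ge_2_nat[OF prime] by simp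
    then have "even (Suc p)" by simp
    then obtain k where "Suc p = 2 * k" by (rule evenE)
    then have "\<Sum>{0..p} = p * k" by (simp add: gauss_sum_nat)
    then have "w [^] (\<Sum>{0..p}) = (w [^] p) [^] k" using w by (simp add: nat_pow_pow)
    then have "c [^] p = \<one>" using key wp cc by simp
    then show ?thesis using A_p_torsion_powers_z[OF c] by blast
  next
    case p2: True
    have "\<Sum>{0..p} = 3" unfolding p2 by (simp add: gauss_sum_nat)
    moreover have "w [^] (3::nat) = w" using wp p2 w by (simp add: numeral_3_eq_3 numeral_2_eq_2 m_assoc)
    ultimately have key2: "c [^] (2::nat) \<otimes> w = \<one>" using key p2 by simp
    show ?thesis
    proof (cases "w = \<one>")
      case True
      then show ?thesis using A_p_torsion_powers_z[OF c] key2 cc p2 by simp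
    next
      case False
      have "odd q"
      proof
        assume "even q"
        then obtain m where "q = 2 * m" by blast
        then have "w = (z [^] p) [^] m" unfolding w_def using z p2 by (simp add: nat_pow_pow)
        then show False using False z_pow_p by simp
      qed
      have "inv w = c [^] (2::nat)" using key2 w cc by (intro inv_equality) auto
      have "c [^] (4::nat) = (c [^] (2::nat)) [^] (2::nat)" using cc by (simp add: nat_pow_pow)
      also have "\<dots> = inv (w [^] p)"
        unfolding p2 \<open>inv w = _\<close>[symmetric] using w by (simp add: nat_pow_inv)
      finally have "a [^] (q * 4) = \<one>" using wp cq a by (simp add: nat_pow_pow)
      then have "a [^] (4::nat) = \<one>"
        using pow_eq_one_if_coprime_mult[OF order_eq prime a] \<open>odd q\<close> p2 by auto
      then show ?thesis using not_small p2 by blast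
    qed
  qed
qed

lemma conj_t_order_four_case:
  assumes p2: "p = 2" and a4: "a [^] (4::nat) = \<one>" and x: "x \<in> carrier G"
  shows "\<exists>j::nat. x \<otimes> t \<otimes> inv x = t \<otimes> z [^] j"
proof -
  have sq: "b [^] (2::nat) = b \<otimes> b" if "b \<in> carrier G" for b using that by (simp add: numeral_2_eq_2)
  have z2: "z [^] (2::nat) = \<one>" using z_pow_p p2 by simp
  obtain \<zeta> :: nat where z\<zeta>: "z = a [^] \<zeta>" using mem_A_pow_a z_mem_A by blast
  have a2: "a [^] (2::nat) \<noteq> \<one>"
  proof
    assume a2: "a [^] (2::nat) = \<one>"
    then have "z = a [^] (\<zeta> mod 2)" using pow_mod_exponent[OF a a2] z\<zeta> by simp
    moreover have "\<zeta> mod 2 = 0 \<or> \<zeta> mod 2 = 1" by linarith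
    ultimately have "z = a" using z_ne_one a by auto
    then have "t \<otimes> a \<otimes> inv t = \<one>" using t_conj_a a2 sq a by simp
    then show False using conj_cancel[OF t a one_closed] \<open>z = a\<close> z_ne_one t by simp
  qed
  have "z = a [^] (\<zeta> mod 4)" using pow_mod_exponent[OF a a4] z\<zeta> by simp
  moreover have "\<zeta> mod 4 = 0 \<or> \<zeta> mod 4 = 1 \<or> \<zeta> mod 4 = 2 \<or> \<zeta> mod 4 = 3" by linarith
  moreover have "a [^] (6::nat) = a [^] (2::nat)"
    using pow_mod_exponent[OF a a4, of 6] by simp
  ultimately have za: "z = a [^] (2::nat)"
    using z_ne_one z2 a2 a by (auto simp: nat_pow_pow)
  obtain k :: nat where "x \<otimes> a \<otimes> inv x = a [^] k"
    using mem_A_pow_a normal.inv_op_closed2[OF A_normal x a_mem_A] by blast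
  then have xa: "x \<otimes> a \<otimes> inv x = a [^] (k mod 4)" using pow_mod_exponent[OF a a4] by simp
  have xa2: "x \<otimes> a [^] (2::nat) \<otimes> inv x = (a [^] (k mod 4)) [^] (2::nat)"
    unfolding conj_pow[OF x a] xa ..
  consider "k mod 4 = 0" | "k mod 4 = 2" | "k mod 4 = 1" | "k mod 4 = 3" by linarith
  then show ?thesis
  proof cases
    case 1
    then have "x \<otimes> a [^] (2::nat) \<otimes> inv x = x \<otimes> \<one> \<otimes> inv x" using xa2 x by simp
    then show ?thesis using conj_cancel[OF x nat_pow_closed[OF a] one_closed] a2 by blast
  next
    case 2
    then have "x \<otimes> a [^] (2::nat) \<otimes> inv x = x \<otimes> \<one> \<otimes> inv x"
      using xa2 x a a4 by (simp add: nat_pow_pow)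
    then show ?thesis using conj_cancel[OF x nat_pow_closed[OF a] one_closed] a2 by blast
  next
    case 3
    then have "x \<otimes> a \<otimes> inv x = a" using xa a by simp
    then have "x \<in> A" using mem_A_if_commute_a[OF x] commute_if_conj_eq[OF x a] by blast
    then show ?thesis by (rule conj_t_if_mem_A)
  next
    case 4
    then have "x \<otimes> a \<otimes> inv x = a [^] (2::nat) \<otimes> a" using xa a by (simp add: numeral_3_eq_3 sq)
    also have "\<dots> = t \<otimes> a \<otimes> inv t" using t_conj_a za by simp
    finally show ?thesis using conj_t_if_conj_a_eq[OF x] by blast
  qed
qed

lemma conj_t:
  assumes x: "x \<in> carrier G"
  shows "\<exists>j::nat. x \<otimes> t \<otimes> inv x = t \<otimes> z [^] j"
proof (cases "p = 2 \<and> a [^] (4::nat) = \<one>")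
  case True
  then show ?thesis using conj_t_order_four_case x by blast
next
  case False
  define c where "c = inv t \<otimes> (x \<otimes> t \<otimes> inv x)"
  have xt: "x \<otimes> t \<otimes> inv x = t \<otimes> c" unfolding c_def using x t by simp
  have "(t \<otimes> c) [^] p = \<one>"
    unfolding xt[symmetric] conj_pow[OF x t, symmetric] t_pow_p using x by simp
  then have "\<exists>i::nat. c = z [^] i"
    using t_mult_order_p_powers_z conj_t_in_coset[OF x, folded c_def] False by blast
  then show ?thesis using xt by auto
qed

lemma exists_normal_abelian_noncyclic:
  "\<exists>E. normal_abelian G E \<and> \<not> cyclic_group (G\<lparr>carrier := E\<rparr>)"
proof -
  define E where "E = {z [^] (i::nat) \<otimes> t [^] (j::nat) | i j. True}"
  note E_props = commuting_pair_products[OF z t t_z_commute[symmetric] z_pow_p t_pow_p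
      prime_gt_0_nat[OF prime] E_def]
  have "x \<otimes> h \<otimes> inv x \<in> E" if x: "x \<in> carrier G" and h: "h \<in> E" for x h
  proof -
    obtain i j :: nat where hij: "h = z [^] i \<otimes> t [^] j" using h unfolding E_def by blast
    obtain r :: nat where r: "x \<otimes> z \<otimes> inv x = z [^] r" using conj_A_power_map[OF x] z_mem_A by blast
    obtain k :: nat where k: "x \<otimes> t \<otimes> inv x = t \<otimes> z [^] k" using conj_t[OF x] by blast
    have "x \<otimes> h \<otimes> inv x = (z [^] r) [^] i \<otimes> (t \<otimes> z [^] k) [^] j"
      unfolding hij conj_mult[OF x nat_pow_closed[OF z] nat_pow_closed[OF t]] conj_pow[OF x z]
        conj_pow[OF x t] r k ..
    moreover have "t \<otimes> z [^] k \<in> E"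
      using subgroup.m_closed[OF E_props(1) E_props(5) subgroup_nat_pow_closed[OF E_props(1) E_props(4)]] .
    ultimately show ?thesis
      using subgroup.m_closed[OF E_props(1)] subgroup_nat_pow_closed[OF E_props(1)] E_props(4) by simp
  qed
  then have "normal_abelian G E"
    using E_props(1,2) unfolding normal_abelian_def normal_inv_iff by blast
  moreover have "\<not> cyclic_group (G\<lparr>carrier := E\<rparr>)"
  proof
    assume "cyclic_group (G\<lparr>carrier := E\<rparr>)"
    then obtain i :: nat where "t = z [^] i"
      using cyclic_exponent_prime_powers_of_nontrivial[OF prime finite_carrier_if_prime_power_order[OF
            order_eq prime] E_props(1)] E_props(3-5) z_ne_one by blast
    then show False using t_notin_A subgroup_nat_pow_closed[OF A_subgroup z_mem_A] by simp
  qed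
  ultimately show ?thesis by blast
qed

end

lemma (in self_centralizing_cyclic) exists_twisted:
  assumes T: "subgroup T G" and Tne: "T \<noteq> {\<one>}" and exp: "expansive G T"
    and core: "core_in G (carrier G) T = {\<one>}"
  shows "\<exists>t z. twisted_self_centralizing_cyclic G p n A a t z"
proof -
  have TA: "T \<inter> A \<subseteq> {\<one>}" by (rule inter_A_trivial_if_core_trivial[OF T core])
  obtain t0 w0 where t0T: "t0 \<in> T" and "t0 \<noteq> \<one>" and w0A: "w0 \<in> A"
    and t0a: "t0 \<otimes> a \<otimes> inv t0 = w0 \<otimes> a" and w0t0: "t0 \<otimes> w0 = w0 \<otimes> t0"
    using exists_commutator_twist[OF T Tne exp TA] by blast
  have t0: "t0 \<in> carrier G" using subgroup.mem_carrier[OF T t0T] .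
  have w0c: "w0 \<in> carrier G" using w0A A_subset by blast
  obtain m where "m > 0" and om: "ord t0 = m * p"
    using ord_eq_mult_prime[OF order_eq prime t0 \<open>t0 \<noteq> \<one>\<close>] by blast
  define t where "t = t0 [^] m"
  define z where "z = w0 [^] m"
  have t: "t \<in> carrier G" unfolding t_def using t0 by simp
  have tp: "t [^] p = \<one>" unfolding t_def using t0 om pow_ord_eq_1[OF t0] by (simp add: nat_pow_pow)
  have tka: "t0 [^] k \<otimes> a \<otimes> inv (t0 [^] k) = w0 [^] k \<otimes> a" for k :: nat
    by (rule twist_conj_pow[OF t0 a w0c t0a w0t0])
  have "w0 [^] (ord t0) = \<one>" using tka[of "ord t0"] t0 a w0c by simp
  then have zp: "z [^] p = \<one>" unfolding z_def using w0c om by (simp add: nat_pow_pow)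
  have zA: "z \<in> A" unfolding z_def using subgroup_nat_pow_closed[OF A_subgroup w0A] .
  have ta: "t \<otimes> a \<otimes> inv t = z \<otimes> a" unfolding t_def z_def by (rule tka)
  have tz: "t \<otimes> z = z \<otimes> t"
    unfolding t_def z_def using pow_commute_pow[OF t0 w0c w0t0] .
  have "t \<noteq> \<one>"
  proof
    assume "t = \<one>"
    then have "m * p dvd m" using t0 om unfolding t_def by (simp add: pow_eq_id)
    then show False using \<open>m > 0\<close> prime by (simp add: prime_gt_1_nat)
  qed
  moreover have "t \<in> T" unfolding t_def using subgroup_nat_pow_closed[OF T t0T] .
  ultimately have "z \<noteq> \<one>"
  proof (intro notI)
    assume "t \<noteq> \<one>" "t \<in> T" "z = \<one>"
    then have "t \<otimes> a \<otimes> inv t = a" using ta a by simp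
    then have "t \<in> A" using mem_A_if_commute_a[OF t] commute_if_conj_eq[OF t a] by blast
    then show False using TA \<open>t \<in> T\<close> \<open>t \<noteq> \<one>\<close> by blast
  qed
  with t tp zA zp ta tz have "twisted_self_centralizing_cyclic G p n A a t z"
    by (intro twisted_self_centralizing_cyclic.intro twisted_self_centralizing_cyclic_axioms.intro
        self_centralizing_cyclic_axioms)
  then show ?thesis by blast
qed

theorem mainTheorem1:
  fixes P :: "('a, 'b) monoid_scheme" and p n :: nat
  assumes "Factorial_Ring.prime p"
    and "group P"
    and "finite (carrier P)"
    and "order P = p ^ n"
    and "roquette_group P"
  shows "\<not> (\<exists>T. subgroup T P \<and> T \<noteq> {\<one>\<^bsub>P\<^esub>} \<and> expansive P T
              \<and> core_in P (carrier P) T = {\<one>\<^bsub>P\<^esub>})"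
proof
  assume "\<exists>T. subgroup T P \<and> T \<noteq> {\<one>\<^bsub>P\<^esub>} \<and> expansive P T \<and> core_in P (carrier P) T = {\<one>\<^bsub>P\<^esub>}"
  then obtain T where T: "subgroup T P" "T \<noteq> {\<one>\<^bsub>P\<^esub>}" "expansive P T"
    "core_in P (carrier P) T = {\<one>\<^bsub>P\<^esub>}" by blast
  interpret group P by fact
  obtain A a where "self_centralizing_cyclic P p n A a"
    using exists_self_centralizing_cyclic[OF assms(4,1,5)] by blast
  then interpret self_centralizing_cyclic P p n A a .
  obtain t z where "twisted_self_centralizing_cyclic P p n A a t z"
    using exists_twisted[OF T] by blast
  then interpret twisted_self_centralizing_cyclic P p n A a t z .
  obtain E where "normal_abelian P E" and "\<not> cyclic_group (P\<lparr>carrier := E\<rparr>)"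
    using exists_normal_abelian_noncyclic by blast
  then show False using roquette_normal_abelian_cyclic[OF assms(5)] by blast
qed

end
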